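(* Let $\mathcal B$ be finite, $\eta>0$, $Q,\tilde Q\in\mathbb R^{\mathcal B}$, $V=\eta^{-1}\log\sum_be^{\eta Q(b)}$, $\tilde V=\eta^{-1}\log\sum_be^{\eta\tilde Q(b)}$, $A=Q-V\mathbf 1$, $\tilde A=\tilde Q-\tilde V\mathbf 1$, $\nu=\exp(\eta A)$, $\tilde\nu=\exp(\eta\tilde A)$. Then for every $\xi\in\mathbb R$, $$D_{\rm TV}(\nu,\tilde\nu)\le\eta\Bigl\langle\nu,\ |\tilde Q-Q-\xi\mathbf 1|+\tfrac\eta2\exp\bigl(\eta|\tilde Q-Q-\xi\mathbf 1|\bigr)(\tilde Q-Q-\xi\mathbf 1)^2\Bigr\rangle_{\mathcal B},$$ in particular $D_{\rm TV}(\nu,\tilde\nu)\le\eta\bigl\langle\nu,|\tilde A-A|+\frac\eta2\exp(\eta|\tilde A-A|)(\tilde A-A)^2\bigr\rangle_{\mathcal B}$ (all operations entrywise). Moreover, $$D_{\rm TV}(\nu,\tilde\nu)\ge\tfrac12\bigl\langle\nu,\ \eta\exp(-\eta|\tilde A-A|)\,|\tilde A-A|\bigr\rangle_{\mathcal B},$$ and if $B_A>0$ satisfies $\max\{\|A\|_\infty,\|\tilde A\|_\infty\}\le B_A$, then $$D_{\rm TV}(\nu,\tilde\nu)\ge\frac{\eta}{2(1+2\eta B_A)}\langle\nu,|\tilde A-A|\rangle_{\mathcal B}.$$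
   Context: $D_{\rm TV}(p,q)=\frac12\|p-q\|_1$; $\langle f,g\rangle_{\mathcal B}=\sum_{b\in\mathcal B}f(b)g(b)$; $\mathbf 1$ is the all-ones vector. *)

theory Defs
  imports "HOL-Analysis.Analysis"
begin

definition softV :: "real \<Rightarrow> 'b set \<Rightarrow> ('b \<Rightarrow> real) \<Rightarrow> real" where
  "softV \<eta> B Q = ln (\<Sum>b\<in>B. exp (\<eta> * Q b)) / \<eta>"

definition adv :: "real \<Rightarrow> 'b set \<Rightarrow> ('b \<Rightarrow> real) \<Rightarrow> 'b \<Rightarrow> real" where
  "adv \<eta> B Q b = Q b - softV \<eta> B Q"

definition softpol :: "real \<Rightarrow> 'b set \<Rightarrow> ('b \<Rightarrow> real) \<Rightarrow> 'b \<Rightarrow> real" where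
  "softpol \<eta> B Q b = exp (\<eta> * adv \<eta> B Q b)"

definition dTV :: "'b set \<Rightarrow> ('b \<Rightarrow> real) \<Rightarrow> ('b \<Rightarrow> real) \<Rightarrow> real" where
  "dTV B p q = (\<Sum>b\<in>B. \<bar>p b - q b\<bar>) / 2"

end

theory Submission
  imports Defs
begin

text \<open>
  Since \<open>\<nu>t b = \<nu> b * exp (\<eta> * (At b - A b))\<close>, the total variation distance is half the
  \<open>\<nu>\<close>-average of \<open>\<bar>exp (\<eta> * (At b - A b)) - 1\<bar>\<close>, and all bounds reduce to elementary
  estimates of \<open>\<bar>exp x - 1\<bar>\<close>. For the upper bound with an arbitrary shift \<open>\<xi>\<close>, \<open>\<nu>t\<close> is the
  renormalisation of the reweighting \<open>\<nu> * exp (\<eta> * (Qt - Q - \<xi>))\<close>, and renormalising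
  a reweighting \<open>p * w\<close> of a probability vector \<open>p\<close> costs at most as much as the
  reweighting itself, namely the \<open>p\<close>-average of \<open>\<bar>w - 1\<bar>\<close>.
\<close>

lemma abs_exp_minus_one_le: "\<bar>exp x - 1\<bar> \<le> \<bar>x\<bar> + exp \<bar>x\<bar> * x\<^sup>2 / 2" for x :: real
proof -
  obtain t where t: "\<bar>t\<bar> \<le> \<bar>x\<bar>" "exp x = (\<Sum>m<2. x ^ m / fact m) + exp t / fact 2 * x ^ 2"
    using Maclaurin_exp_le[of x 2] by blast
  then have remainder: "exp x - 1 - x = exp t * x\<^sup>2 / 2"
    by (simp add: numeral_2_eq_2)
  have "exp t * x\<^sup>2 \<le> exp \<bar>x\<bar> * x\<^sup>2"
    using t(1) by (intro mult_right_mono) auto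
  moreover have "0 \<le> exp t * x\<^sup>2"
    by simp
  ultimately show ?thesis
    unfolding abs_le_iff using remainder abs_ge_self[of x] abs_ge_minus_self[of x] by linarith
qed

lemma one_minus_exp_neg_abs_le: "1 - exp (- \<bar>x\<bar>) \<le> \<bar>exp x - 1\<bar>" for x :: real
proof (cases "x \<ge> 0")
  case True
  have "2 \<le> exp x + exp (- x)"
    using exp_ge_add_one_self[of x] exp_ge_add_one_self[of "- x"] by linarith
  with True show ?thesis by simp
qed simp

lemma divide_one_plus_le_abs_exp_minus_one: "\<bar>x\<bar> / (1 + \<bar>x\<bar>) \<le> \<bar>exp x - 1\<bar>" for x :: real
proof -
  have "exp (- \<bar>x\<bar>) \<le> 1 / (1 + \<bar>x\<bar>)"
    using exp_ge_add_one_self[of "\<bar>x\<bar>"] by (simp add: exp_minus inverse_eq_divide frac_le)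
  moreover have "\<bar>x\<bar> / (1 + \<bar>x\<bar>) = 1 - 1 / (1 + \<bar>x\<bar>)"
    by (simp add: field_simps)
  ultimately show ?thesis
    using one_minus_exp_neg_abs_le[of x] by linarith
qed

lemma mult_exp_neg_le_divide_one_plus:
  fixes y :: real
  assumes "y \<ge> 0"
  shows "y * exp (- y) \<le> y / (1 + y)"
proof -
  have "exp (- y) \<le> 1 / (1 + y)"
    using assms exp_ge_add_one_self[of y] by (simp add: exp_minus inverse_eq_divide frac_le)
  then show ?thesis
    using mult_left_mono[OF _ assms] by (simp add: divide_inverse)
qed

lemma dTV_density:
  assumes "\<forall>b\<in>B. p b \<ge> 0" and "\<forall>b\<in>B. q b = p b * w b"
  shows "dTV B p q = (\<Sum>b\<in>B. p b * \<bar>w b - 1\<bar>) / 2"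
proof -
  have "\<bar>p b - q b\<bar> = p b * \<bar>w b - 1\<bar>" if "b \<in> B" for b
  proof -
    have "p b - q b = p b * (1 - w b)"
      using assms(2) that by (simp add: right_diff_distrib)
    then show ?thesis
      using assms(1) that by (simp add: abs_mult abs_minus_commute)
  qed
  then show ?thesis
    unfolding dTV_def by simp
qed

lemma dTV_renormalised_reweighting_le:
  assumes p: "\<forall>b\<in>B. p b \<ge> 0" "sum p B = 1" and w: "\<forall>b\<in>B. w b \<ge> 0"
    and q: "\<forall>b\<in>B. q b = c * (p b * w b)" "sum q B = 1"
  shows "dTV B p q \<le> (\<Sum>b\<in>B. p b * \<bar>w b - 1\<bar>)"
proof -
  define Z where "Z = (\<Sum>b\<in>B. p b * w b)"
  have "c * Z = 1"
    using q by (simp add: Z_def sum_distrib_left)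
  moreover have "Z \<ge> 0"
    using p w by (simp add: Z_def sum_nonneg)
  ultimately have c_gap: "\<bar>c - 1\<bar> * Z = \<bar>Z - 1\<bar>"
    by (metis abs_minus_commute abs_mult_pos left_diff_distrib mult_1)
  have "Z - 1 = (\<Sum>b\<in>B. p b * (w b - 1))"
    using p by (simp add: Z_def right_diff_distrib sum_subtractf)
  also have "\<bar>\<dots>\<bar> \<le> (\<Sum>b\<in>B. p b * \<bar>w b - 1\<bar>)"
    using p by (intro order_trans[OF sum_abs] sum_mono) (simp add: abs_mult)
  finally have Z_gap: "\<bar>Z - 1\<bar> \<le> (\<Sum>b\<in>B. p b * \<bar>w b - 1\<bar>)" .
  have "\<bar>c * w b - 1\<bar> \<le> \<bar>c - 1\<bar> * w b + \<bar>w b - 1\<bar>" if "b \<in> B" for b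
  proof -
    have "\<bar>c * w b - 1\<bar> = \<bar>(c - 1) * w b + (w b - 1)\<bar>"
      by (simp add: algebra_simps)
    then show ?thesis
      using w that by (metis abs_mult abs_of_nonneg abs_triangle_ineq)
  qed
  then have "(\<Sum>b\<in>B. p b * \<bar>c * w b - 1\<bar>)
      \<le> (\<Sum>b\<in>B. p b * (\<bar>c - 1\<bar> * w b + \<bar>w b - 1\<bar>))"
    using p by (intro sum_mono mult_left_mono) auto
  also have "\<dots> = \<bar>c - 1\<bar> * Z + (\<Sum>b\<in>B. p b * \<bar>w b - 1\<bar>)"
    by (simp add: Z_def sum.distrib sum_distrib_left algebra_simps)
  finally have "(\<Sum>b\<in>B. p b * \<bar>c * w b - 1\<bar>) \<le> 2 * (\<Sum>b\<in>B. p b * \<bar>w b - 1\<bar>)"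
    using c_gap Z_gap by linarith
  moreover have "dTV B p q = (\<Sum>b\<in>B. p b * \<bar>c * w b - 1\<bar>) / 2"
    using p q by (intro dTV_density) (simp_all add: mult_ac)
  ultimately show ?thesis
    by simp
qed

lemma softpol_pos: "softpol \<eta> B Q b > 0"
  by (simp add: softpol_def)

lemma sum_softpol:
  assumes "finite B" and "B \<noteq> {}" and "\<eta> \<noteq> 0"
  shows "(\<Sum>b\<in>B. softpol \<eta> B Q b) = 1"
proof -
  define S where "S = (\<Sum>b\<in>B. exp (\<eta> * Q b))"
  have "S > 0"
    using assms by (simp add: S_def sum_pos)
  moreover have "softpol \<eta> B Q b = exp (\<eta> * Q b) / S" for b
    using assms \<open>S > 0\<close>
    by (simp add: softpol_def adv_def softV_def S_def[symmetric] right_diff_distrib exp_diff)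
  ultimately show ?thesis
    by (simp add: S_def sum_divide_distrib[symmetric])
qed

lemma adv_diff: "adv \<eta> B Qt b - adv \<eta> B Q b = Qt b - Q b - (softV \<eta> B Qt - softV \<eta> B Q)"
  by (simp add: adv_def)

lemma softpol_eq_mult_exp_adv_diff:
  "softpol \<eta> B Qt b = softpol \<eta> B Q b * exp (\<eta> * (adv \<eta> B Qt b - adv \<eta> B Q b))"
  unfolding softpol_def mult_exp_exp by (simp add: algebra_simps)

lemma dTV_softpol_eq:
  "dTV B (softpol \<eta> B Q) (softpol \<eta> B Qt)
     = (\<Sum>b\<in>B. softpol \<eta> B Q b * \<bar>exp (\<eta> * (adv \<eta> B Qt b - adv \<eta> B Q b)) - 1\<bar>) / 2"
  by (intro dTV_density) (simp_all add: softpol_pos less_imp_le softpol_eq_mult_exp_adv_diff)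

lemma dTV_softpol_le:
  fixes Q Qt :: "'b \<Rightarrow> real" and \<xi> :: real
  assumes "finite B" and "B \<noteq> {}" and "\<eta> > 0"
  defines "D b \<equiv> Qt b - Q b - \<xi>"
  shows "dTV B (softpol \<eta> B Q) (softpol \<eta> B Qt)
     \<le> \<eta> * (\<Sum>b\<in>B. softpol \<eta> B Q b * (\<bar>D b\<bar> + \<eta> / 2 * exp (\<eta> * \<bar>D b\<bar>) * (D b)\<^sup>2))"
proof -
  let ?\<nu> = "softpol \<eta> B Q"
  define c where "c = exp (\<eta> * (\<xi> - (softV \<eta> B Qt - softV \<eta> B Q)))"
  have reweight: "softpol \<eta> B Qt b = c * (?\<nu> b * exp (\<eta> * D b))" for b
    unfolding softpol_eq_mult_exp_adv_diff[of \<eta> B Qt b Q] adv_diff D_def c_def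
    by (simp add: mult_exp_exp algebra_simps)
  have "dTV B ?\<nu> (softpol \<eta> B Qt) \<le> (\<Sum>b\<in>B. ?\<nu> b * \<bar>exp (\<eta> * D b) - 1\<bar>)"
  proof (rule dTV_renormalised_reweighting_le)
    show "\<forall>b\<in>B. softpol \<eta> B Qt b = c * (?\<nu> b * exp (\<eta> * D b))"
      using reweight by blast
  qed (use assms(1,2) \<open>\<eta> > 0\<close> in \<open>simp_all add: softpol_pos less_imp_le sum_softpol\<close>)
  also have "\<dots> \<le> (\<Sum>b\<in>B. ?\<nu> b * (\<eta> * (\<bar>D b\<bar> + \<eta> / 2 * exp (\<eta> * \<bar>D b\<bar>) * (D b)\<^sup>2)))"
  proof (intro sum_mono mult_left_mono)
    fix b
    show "\<bar>exp (\<eta> * D b) - 1\<bar> \<le> \<eta> * (\<bar>D b\<bar> + \<eta> / 2 * exp (\<eta> * \<bar>D b\<bar>) * (D b)\<^sup>2)"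
      using abs_exp_minus_one_le[of "\<eta> * D b"] \<open>\<eta> > 0\<close>
      by (simp add: abs_mult power_mult_distrib power2_eq_square algebra_simps)
  qed (simp add: softpol_pos less_imp_le)
  finally show ?thesis
    by (simp add: sum_distrib_left mult_ac)
qed

lemma dTV_softpol_ge_divide:
  assumes "\<eta> > 0" and bound: "\<forall>b\<in>B. \<eta> * \<bar>adv \<eta> B Qt b - adv \<eta> B Q b\<bar> \<le> r"
  shows "dTV B (softpol \<eta> B Q) (softpol \<eta> B Qt)
     \<ge> \<eta> / (2 * (1 + r)) * (\<Sum>b\<in>B. softpol \<eta> B Q b * \<bar>adv \<eta> B Qt b - adv \<eta> B Q b\<bar>)"
proof -
  let ?\<Delta> = "\<lambda>b. adv \<eta> B Qt b - adv \<eta> B Q b"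
  have "\<eta> / (1 + r) * \<bar>?\<Delta> b\<bar> \<le> \<bar>exp (\<eta> * ?\<Delta> b) - 1\<bar>" if "b \<in> B" for b
  proof -
    have "\<eta> * \<bar>?\<Delta> b\<bar> \<le> r" and "0 \<le> \<eta> * \<bar>?\<Delta> b\<bar>"
      using bound that assms(1) by auto
    then have "\<eta> * \<bar>?\<Delta> b\<bar> / (1 + r) \<le> \<eta> * \<bar>?\<Delta> b\<bar> / (1 + \<eta> * \<bar>?\<Delta> b\<bar>)"
      by (intro divide_left_mono mult_pos_pos) linarith+
    also have "\<dots> \<le> \<bar>exp (\<eta> * ?\<Delta> b) - 1\<bar>"
      using divide_one_plus_le_abs_exp_minus_one[of "\<eta> * ?\<Delta> b"] assms(1) by (simp add: abs_mult)
    finally show ?thesis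
      by simp
  qed
  then have "(\<Sum>b\<in>B. softpol \<eta> B Q b * (\<eta> / (1 + r) * \<bar>?\<Delta> b\<bar>))
      \<le> (\<Sum>b\<in>B. softpol \<eta> B Q b * \<bar>exp (\<eta> * ?\<Delta> b) - 1\<bar>)"
    by (intro sum_mono mult_left_mono) (simp_all add: softpol_pos less_imp_le)
  moreover have "2 * (\<eta> / (2 * (1 + r)) * S) = \<eta> / (1 + r) * S" for S
    by (cases "1 + r = 0") (simp_all add: field_simps)
  moreover have "\<eta> / (1 + r) * (\<Sum>b\<in>B. softpol \<eta> B Q b * \<bar>?\<Delta> b\<bar>)
      = (\<Sum>b\<in>B. softpol \<eta> B Q b * (\<eta> / (1 + r) * \<bar>?\<Delta> b\<bar>))"
    by (subst sum_distrib_left) (simp add: mult_ac)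
  ultimately have "2 * (\<eta> / (2 * (1 + r)) * (\<Sum>b\<in>B. softpol \<eta> B Q b * \<bar>?\<Delta> b\<bar>))
      \<le> (\<Sum>b\<in>B. softpol \<eta> B Q b * \<bar>exp (\<eta> * ?\<Delta> b) - 1\<bar>)"
    by metis
  then show ?thesis
    unfolding dTV_softpol_eq by linarith
qed

lemma dTV_softpol_ge_exp:
  assumes "\<eta> > 0"
  shows "dTV B (softpol \<eta> B Q) (softpol \<eta> B Qt)
     \<ge> 1/2 * (\<Sum>b\<in>B. softpol \<eta> B Q b * (\<eta> * exp (- \<eta> * \<bar>adv \<eta> B Qt b - adv \<eta> B Q b\<bar>)
                                          * \<bar>adv \<eta> B Qt b - adv \<eta> B Q b\<bar>))"
proof -
  let ?\<Delta> = "\<lambda>b. adv \<eta> B Qt b - adv \<eta> B Q b"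
  have "\<eta> * exp (- \<eta> * \<bar>?\<Delta> b\<bar>) * \<bar>?\<Delta> b\<bar> \<le> \<bar>exp (\<eta> * ?\<Delta> b) - 1\<bar>" for b
  proof -
    have "\<eta> * \<bar>?\<Delta> b\<bar> * exp (- (\<eta> * \<bar>?\<Delta> b\<bar>)) \<le> \<eta> * \<bar>?\<Delta> b\<bar> / (1 + \<eta> * \<bar>?\<Delta> b\<bar>)"
      using assms by (intro mult_exp_neg_le_divide_one_plus) simp
    also have "\<dots> \<le> \<bar>exp (\<eta> * ?\<Delta> b) - 1\<bar>"
      using divide_one_plus_le_abs_exp_minus_one[of "\<eta> * ?\<Delta> b"] assms by (simp add: abs_mult)
    finally show ?thesis
      by (simp add: mult_ac)
  qed
  then have "(\<Sum>b\<in>B. softpol \<eta> B Q b * (\<eta> * exp (- \<eta> * \<bar>?\<Delta> b\<bar>) * \<bar>?\<Delta> b\<bar>))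
      \<le> (\<Sum>b\<in>B. softpol \<eta> B Q b * \<bar>exp (\<eta> * ?\<Delta> b) - 1\<bar>)"
    by (intro sum_mono mult_left_mono) (simp_all add: softpol_pos less_imp_le)
  then show ?thesis
    by (simp add: dTV_softpol_eq)
qed

theorem mainTheorem10:
  fixes B :: "'b set" and \<eta> :: real and Q Qt :: "'b \<Rightarrow> real"
  assumes "finite B" and "B \<noteq> {}" and "\<eta> > 0"
  defines "A \<equiv> adv \<eta> B Q" and "At \<equiv> adv \<eta> B Qt"
      and "\<nu> \<equiv> softpol \<eta> B Q" and "\<nu>t \<equiv> softpol \<eta> B Qt"
  shows "(\<forall>\<xi>::real. dTV B \<nu> \<nu>t \<le> \<eta> * (\<Sum>b\<in>B. \<nu> b *
            (\<bar>Qt b - Q b - \<xi>\<bar> + \<eta> / 2 * exp (\<eta> * \<bar>Qt b - Q b - \<xi>\<bar>) * (Qt b - Q b - \<xi>)\<^sup>2))) \<and>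
        dTV B \<nu> \<nu>t \<le> \<eta> * (\<Sum>b\<in>B. \<nu> b *
            (\<bar>At b - A b\<bar> + \<eta> / 2 * exp (\<eta> * \<bar>At b - A b\<bar>) * (At b - A b)\<^sup>2)) \<and>
        dTV B \<nu> \<nu>t \<ge> 1/2 * (\<Sum>b\<in>B. \<nu> b * (\<eta> * exp (- \<eta> * \<bar>At b - A b\<bar>) * \<bar>At b - A b\<bar>)) \<and>
        (\<forall>BA::real. BA > 0 \<longrightarrow> (\<forall>b\<in>B. \<bar>A b\<bar> \<le> BA \<and> \<bar>At b\<bar> \<le> BA) \<longrightarrow>
            dTV B \<nu> \<nu>t \<ge> \<eta> / (2 * (1 + 2 * \<eta> * BA)) * (\<Sum>b\<in>B. \<nu> b * \<bar>At b - A b\<bar>))"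
proof (intro conjI allI impI)
  fix \<xi>
  show "dTV B \<nu> \<nu>t \<le> \<eta> * (\<Sum>b\<in>B. \<nu> b *
          (\<bar>Qt b - Q b - \<xi>\<bar> + \<eta> / 2 * exp (\<eta> * \<bar>Qt b - Q b - \<xi>\<bar>) * (Qt b - Q b - \<xi>)\<^sup>2))"
    unfolding \<nu>_def \<nu>t_def using assms(1-3) by (rule dTV_softpol_le)
next
  show "dTV B \<nu> \<nu>t \<le> \<eta> * (\<Sum>b\<in>B. \<nu> b *
          (\<bar>At b - A b\<bar> + \<eta> / 2 * exp (\<eta> * \<bar>At b - A b\<bar>) * (At b - A b)\<^sup>2))"
    unfolding \<nu>_def \<nu>t_def A_def At_def adv_diff using assms(1-3) by (rule dTV_softpol_le)
next
  show "dTV B \<nu> \<nu>t \<ge> 1/2 * (\<Sum>b\<in>B. \<nu> b * (\<eta> * exp (- \<eta> * \<bar>At b - A b\<bar>) * \<bar>At b - A b\<bar>))"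
    unfolding \<nu>_def \<nu>t_def A_def At_def using assms(3) by (rule dTV_softpol_ge_exp)
next
  fix BA :: real
  assume "\<forall>b\<in>B. \<bar>A b\<bar> \<le> BA \<and> \<bar>At b\<bar> \<le> BA"
  then have "\<forall>b\<in>B. \<eta> * \<bar>At b - A b\<bar> \<le> 2 * \<eta> * BA"
    using assms(3) mult_left_mono[of _ "2 * BA" \<eta>] by fastforce
  then show "dTV B \<nu> \<nu>t \<ge> \<eta> / (2 * (1 + 2 * \<eta> * BA)) * (\<Sum>b\<in>B. \<nu> b * \<bar>At b - A b\<bar>)"
    unfolding \<nu>_def \<nu>t_def A_def At_def using assms(3) by (intro dTV_softpol_ge_divide)
qed

end
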